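(* Let $\mathcal R^{rrc}$ be a rich single-crossing domain of restricted classical preferences and $R',R''\in\mathcal R^{rrc}$ distinct. If $R''$ cuts $R'$ from above (at the bundles $(t,q)$ with $q>0$ and $t<\min\{t_{R'},t_{R''}\}$), then $t_{R'}<t_{R''}$.
   Context: $(t',q')<(t'',q'')$ means $t'<t''$, $q'<q''$; $x\le y$ means $x=y$ or $x<y$; $\square(z)=\{x:x\le z\}$. A restricted classical preference is a complete transitive relation $R$ (strict part $P$, indifference $I$) on $[0,t_R]\times[0,1]$, with a unique payment bound $0<t_R<\infty$, such that: (money-monotone) for all $q\in(0,1]$, $t_R\ge t''>t'\ge0$ implies $(t',q)P(t'',q)$; ($q$-monotone) for all $t\in[0,t_R)$, $1\ge q''>q'\ge0$ implies $(t,q'')P(t,q')$; (0-equivalence) $(0,0)I(t_R,q)$ for all $q\in[0,1]$ and $(0,0)I(t,0)$ for all $t\in[0,t_R)$; and $R$ is continuous (closed upper and lower contour sets) on $[0,t_R]\times[0,1]$. Two restricted classical preferences $R',R''$ with $t_{R'}\ne t_{R''}$ satisfy single-crossing if for every $(t,q)$ with $q>0$, $t<\min\{t_{R'},t_{R''}\}$, the indifference sets of $R'$ and $R''$ through $(t,q)$ meet only at $(t,q)$; $R''$ cuts $R'$ from above at such $(t,q)$ if $\square(t,q)\cap\{x:xR''(t,q)\}\subseteq\square(t,q)\cap\{x:xR'(t,q)\}$. A rich single-crossing domain $\mathcal R^{rrc}$ of restricted classical preferences is a set of pairwise single-crossing restricted classical preferences such that for all $x'<x''$ there is a member $R$ with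 $x'Ix''$. *)

theory Defs
  imports "HOL-Analysis.Analysis"
begin

type_synonym bndl = "real \<times> real"
type_synonym pref = "bndl \<Rightarrow> bndl \<Rightarrow> bool"

definition blt :: "bndl \<Rightarrow> bndl \<Rightarrow> bool" where
  "blt x y \<longleftrightarrow> fst x < fst y \<and> snd x < snd y"

definition ble :: "bndl \<Rightarrow> bndl \<Rightarrow> bool" where
  "ble x y \<longleftrightarrow> x = y \<or> blt x y"

definition lowerbox :: "bndl \<Rightarrow> bndl set" where
  "lowerbox z = {x. ble x z}"

definition dom_box :: "real \<Rightarrow> bndl set" where
  "dom_box tR = {0..tR} \<times> {0..1}"

definition strict :: "pref \<Rightarrow> bndl \<Rightarrow> bndl \<Rightarrow> bool" where
  "strict R x y \<longleftrightarrow> R x y \<and> \<not> R y x"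

definition indiff :: "pref \<Rightarrow> bndl \<Rightarrow> bndl \<Rightarrow> bool" where
  "indiff R x y \<longleftrightarrow> R x y \<and> R y x"

definition rrc_pref :: "pref \<Rightarrow> real \<Rightarrow> bool" where
  "rrc_pref R tR \<longleftrightarrow>
     0 < tR \<and>
     (\<forall>x y. R x y \<longrightarrow> x \<in> dom_box tR \<and> y \<in> dom_box tR) \<and>
     (\<forall>x\<in>dom_box tR. \<forall>y\<in>dom_box tR. R x y \<or> R y x) \<and>
     (\<forall>x y z. R x y \<longrightarrow> R y z \<longrightarrow> R x z) \<and>
     (\<forall>q t' t''. 0 < q \<and> q \<le> 1 \<and> 0 \<le> t' \<and> t' < t'' \<and> t'' \<le> tR
                 \<longrightarrow> strict R (t', q) (t'', q)) \<and>
     (\<forall>t q' q''. 0 \<le> t \<and> t < tR \<and> 0 \<le> q' \<and> q' < q'' \<and> q'' \<le> 1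
                 \<longrightarrow> strict R (t, q'') (t, q')) \<and>
     (\<forall>q. 0 \<le> q \<and> q \<le> 1 \<longrightarrow> indiff R (0, 0) (tR, q)) \<and>
     (\<forall>t. 0 \<le> t \<and> t < tR \<longrightarrow> indiff R (0, 0) (t, 0)) \<and>
     (\<forall>z\<in>dom_box tR. closed {x. R x z} \<and> closed {x. R z x})"

definition is_rrc :: "pref \<Rightarrow> bool" where
  "is_rrc R \<longleftrightarrow> (\<exists>tR. rrc_pref R tR)"

definition pbound :: "pref \<Rightarrow> real" where
  "pbound R = (THE tR. rrc_pref R tR)"

definition single_crossing :: "pref \<Rightarrow> pref \<Rightarrow> bool" where
  "single_crossing R' R'' \<longleftrightarrow>
     is_rrc R' \<and> is_rrc R'' \<and> pbound R' \<noteq> pbound R'' \<and>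
     (\<forall>t q. 0 \<le> t \<and> t < min (pbound R') (pbound R'') \<and> 0 < q \<and> q \<le> 1 \<longrightarrow>
        {x. indiff R' x (t, q)} \<inter> {x. indiff R'' x (t, q)} = {(t, q)})"

definition cuts_from_above :: "pref \<Rightarrow> pref \<Rightarrow> bndl \<Rightarrow> bool" where
  "cuts_from_above R'' R' z \<longleftrightarrow>
     lowerbox z \<inter> {x. R'' x z} \<subseteq> lowerbox z \<inter> {x. R' x z}"

definition rich_sc_domain :: "pref set \<Rightarrow> bool" where
  "rich_sc_domain D \<longleftrightarrow>
     (\<forall>R\<in>D. is_rrc R) \<and>
     (\<forall>R'\<in>D. \<forall>R''\<in>D. R' \<noteq> R'' \<longrightarrow> single_crossing R' R'') \<and>
     (\<forall>x' x''. 0 \<le> fst x' \<and> 0 \<le> snd x' \<and> snd x'' \<le> 1 \<and> blt x' x''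
        \<longrightarrow> (\<exists>R\<in>D. indiff R x' x''))"

end

theory Submission
  imports Defs
begin

(* Suppose b = t_R'' < a = t_R'. For R' the bundle (b,1) is strictly worse than (a,1) ~ (0,0),
   so by continuity some (0,r) with small r > 0 is still strictly better than (b,1). For R'' the
   bundle (b,1) is indifferent to (0,0) and hence strictly worse than (0,r), so by continuity some
   (t,1) with t < b close to b is R''-worse than (0,r). As (0,r) lies in the lower box of (t,1),
   the cut from above transfers this to R': (0,r) is R'-weakly better than (t,1), which is strictly
   better than (b,1) by money-monotonicity -- a contradiction. *)

context
  fixes R :: pref and tR :: real
  assumes R: "rrc_pref R tR"
begin

lemma rrc_pref_bound_pos: "0 < tR"
  using R unfolding rrc_pref_def by blast

lemma rrc_pref_in_dom_box: "R x y \<Longrightarrow> x \<in> dom_box tR \<and> y \<in> dom_box tR"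
  using R unfolding rrc_pref_def by blast

lemma rrc_pref_total: "x \<in> dom_box tR \<Longrightarrow> y \<in> dom_box tR \<Longrightarrow> R x y \<or> R y x"
  using R unfolding rrc_pref_def by blast

lemma rrc_pref_trans: "R x y \<Longrightarrow> R y z \<Longrightarrow> R x z"
  using R unfolding rrc_pref_def by blast

lemma rrc_pref_money_mono:
  "0 < q \<Longrightarrow> q \<le> 1 \<Longrightarrow> 0 \<le> t' \<Longrightarrow> t' < t'' \<Longrightarrow> t'' \<le> tR \<Longrightarrow> strict R (t', q) (t'', q)"
  using R unfolding rrc_pref_def by blast

lemma rrc_pref_quality_mono:
  "0 \<le> t \<Longrightarrow> t < tR \<Longrightarrow> 0 \<le> q' \<Longrightarrow> q' < q'' \<Longrightarrow> q'' \<le> 1 \<Longrightarrow> strict R (t, q'') (t, q')"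
  using R unfolding rrc_pref_def by blast

lemma rrc_pref_indiff_bound: "0 \<le> q \<Longrightarrow> q \<le> 1 \<Longrightarrow> indiff R (0, 0) (tR, q)"
  using R unfolding rrc_pref_def by blast

lemma rrc_pref_indiff_zero_quality: "0 \<le> t \<Longrightarrow> t < tR \<Longrightarrow> indiff R (0, 0) (t, 0)"
  using R unfolding rrc_pref_def by blast

lemma rrc_pref_closed_lower_contour: "z \<in> dom_box tR \<Longrightarrow> closed {x. R x z}"
  using R unfolding rrc_pref_def by blast

lemma rrc_pref_not_weakly_better_nhd:
  assumes "z \<in> dom_box tR" and "\<not> R x z"
  obtains e where "e > 0" and "\<And>y. dist y x < e \<Longrightarrow> \<not> R y z"
proof -
  have "open (- {y. R y z})"
    using rrc_pref_closed_lower_contour[OF assms(1)] by blast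
  moreover have "x \<in> - {y. R y z}"
    using assms(2) by simp
  ultimately obtain e where "e > 0" and "ball x e \<subseteq> - {y. R y z}"
    using open_contains_ball by blast
  then have "\<And>y. dist y x < e \<Longrightarrow> \<not> R y z"
    by (auto simp: subset_iff dist_commute)
  with \<open>e > 0\<close> that show ?thesis by blast
qed

end

lemma rrc_pref_unique:
  assumes "rrc_pref R a" and "rrc_pref R b"
  shows "a = b"
proof -
  have "\<not> a < b" if a: "rrc_pref R a" and b: "rrc_pref R b" for a b
  proof
    assume "a < b"
    have "0 \<le> (a + b) / 2" "(a + b) / 2 < b"
      using rrc_pref_bound_pos[OF a] \<open>a < b\<close> by auto
    then have "R (0, 0) ((a + b) / 2, 0)"
      using rrc_pref_indiff_zero_quality[OF b] unfolding indiff_def by blast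
    then have "((a + b) / 2, 0) \<in> dom_box a"
      using rrc_pref_in_dom_box[OF a] by blast
    with \<open>a < b\<close> show False
      unfolding dom_box_def by auto
  qed
  from this[OF assms] this[OF assms(2,1)] show ?thesis
    by linarith
qed

lemma rrc_pref_pbound:
  assumes "is_rrc R"
  shows "rrc_pref R (pbound R)"
proof -
  obtain tR where "rrc_pref R tR"
    using assms unfolding is_rrc_def by blast
  moreover from this have "pbound R = tR"
    unfolding pbound_def using rrc_pref_unique by blast
  ultimately show ?thesis by simp
qed

lemma rrc_pref_small_quality_not_worse:
  assumes R: "rrc_pref R a" and "0 \<le> b" and "b < a"
  obtains r where "0 < r" and "r < 1" and "\<not> R (0, r) (b, 1)"
proof -
  have "\<not> R (0, 0) (b, 1)"
  proof
    assume "R (0, 0) (b, 1)"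
    moreover have "R (a, 1) (0, 0)"
      using rrc_pref_indiff_bound[OF R] unfolding indiff_def by simp
    ultimately have "R (a, 1) (b, 1)"
      using rrc_pref_trans[OF R] by blast
    moreover have "strict R (b, 1) (a, 1)"
      using rrc_pref_money_mono[OF R] assms(2,3) by simp
    ultimately show False
      unfolding strict_def by blast
  qed
  moreover have "(b, 1) \<in> dom_box a"
    using assms(2,3) unfolding dom_box_def by auto
  ultimately obtain e where "e > 0" and e: "\<And>y. dist y (0, 0) < e \<Longrightarrow> \<not> R y (b, 1)"
    using rrc_pref_not_weakly_better_nhd[OF R] by metis
  define r where "r = min (e / 2) (1 / 2)"
  have "0 < r" "r < 1" "dist (0, r) (0::real, 0::real) < e"
    using \<open>e > 0\<close> by (auto simp: r_def dist_Pair_Pair)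
  with e that show ?thesis by blast
qed

lemma rrc_pref_cheaper_full_quality_worse:
  assumes R: "rrc_pref R b" and "0 < r" and "r \<le> 1"
  obtains t where "0 < t" and "t < b" and "R (0, r) (t, 1)"
proof -
  have "0 < b"
    using rrc_pref_bound_pos[OF R] .
  have dom_0r: "(0, r) \<in> dom_box b"
    using assms(2,3) \<open>0 < b\<close> unfolding dom_box_def by auto
  have "\<not> R (b, 1) (0, r)"
  proof
    assume "R (b, 1) (0, r)"
    moreover have "R (0, 0) (b, 1)"
      using rrc_pref_indiff_bound[OF R] unfolding indiff_def by simp
    ultimately have "R (0, 0) (0, r)"
      using rrc_pref_trans[OF R] by blast
    moreover have "strict R (0, r) (0, 0)"
      using rrc_pref_quality_mono[OF R] assms(2,3) \<open>0 < b\<close> by simp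
    ultimately show False
      unfolding strict_def by blast
  qed
  then obtain e where "e > 0" and e: "\<And>y. dist y (b, 1) < e \<Longrightarrow> \<not> R y (0, r)"
    using rrc_pref_not_weakly_better_nhd[OF R dom_0r] by metis
  define t where "t = max (b / 2) (b - e / 2)"
  have t: "0 < t" "t < b" "dist (t, 1) (b, 1::real) < e"
    using \<open>0 < b\<close> \<open>e > 0\<close> by (auto simp: t_def dist_Pair_Pair dist_real_def)
  then have "(t, 1) \<in> dom_box b"
    unfolding dom_box_def by auto
  then have "R (0, r) (t, 1)"
    using rrc_pref_total[OF R dom_0r] e t(3) by blast
  with t that show ?thesis by blast
qed

theorem mainTheorem16:
  assumes "rich_sc_domain D"
    and "R' \<in> D" and "R'' \<in> D" and "R' \<noteq> R''"
    and "\<forall>t q. 0 \<le> t \<and> t < min (pbound R') (pbound R'') \<and> 0 < q \<and> q \<le> 1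
               \<longrightarrow> cuts_from_above R'' R' (t, q)"
  shows "pbound R' < pbound R''"
proof (rule ccontr)
  assume not_less: "\<not> ?thesis"
  have sc: "single_crossing R' R''"
    using assms(1-4) unfolding rich_sc_domain_def by blast
  define a where "a = pbound R'"
  define b where "b = pbound R''"
  have R': "rrc_pref R' a" and R'': "rrc_pref R'' b"
    using sc rrc_pref_pbound unfolding single_crossing_def a_def b_def by blast+
  have "b < a"
    using sc not_less unfolding single_crossing_def a_def b_def by linarith
  have "0 < b"
    using rrc_pref_bound_pos[OF R''] .
  obtain r where r: "0 < r" "r < 1" and not_R': "\<not> R' (0, r) (b, 1)"
    using rrc_pref_small_quality_not_worse[OF R' less_imp_le[OF \<open>0 < b\<close>] \<open>b < a\<close>] by blast
  obtain t where t: "0 < t" "t < b" and "R'' (0, r) (t, 1)"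
    using rrc_pref_cheaper_full_quality_worse[OF R'' r(1) less_imp_le[OF r(2)]] by blast
  moreover have "(0, r) \<in> lowerbox (t, 1)"
    using t r unfolding lowerbox_def ble_def blt_def by auto
  moreover have "cuts_from_above R'' R' (t, 1)"
    using assms(5) t \<open>b < a\<close> unfolding a_def b_def by auto
  ultimately have "R' (0, r) (t, 1)"
    unfolding cuts_from_above_def by blast
  moreover have "strict R' (t, 1) (b, 1)"
    using rrc_pref_money_mono[OF R'] t \<open>b < a\<close> by simp
  ultimately show False
    using not_R' rrc_pref_trans[OF R'] unfolding strict_def by blast
qed

end
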